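(* Let $c>0$ and let $\{\alpha_t\}_{t\ge1}$ be a sequence of nonnegative reals with $c\alpha_t/4\le1$ for all $t$. Consider the sequences defined by $$\theta_{t+1}=\theta_t+\alpha_t\frac{1}{1+\exp(c\theta_t)},\qquad \theta'_{t+1}=\theta'_t+\alpha_t\frac{1}{1+\exp(c\theta'_t)}.$$ If $\theta_1-\theta'_1\ge0$, then for every $t\ge1$, $$\theta_t-\theta'_t\ge(\theta_1-\theta'_1)\prod_{i=1}^{t-1}\Big(1-\frac{c\alpha_i}{4}\Big).$$ *)

theory Defs
  imports Complex_Main
begin

end

theory Submission
  imports Defs
begin

(* The drift z \<mapsto> 1 / (1 + exp (c z)) has derivative -c e / (1 + e)^2 with e = exp (c z),
   which is at least -c/4 because 4 e \<le> (1 + e)^2. Hence one step of the recursion shrinks the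
   gap \<theta> - \<theta>' by at most the factor 1 - c \<alpha>/4 (and keeps it nonnegative, as that factor is
   nonnegative), and the bound follows by induction. *)

lemma has_real_derivative_logistic:
  fixes c z :: real
  shows "((\<lambda>z. 1 / (1 + exp (c * z))) has_real_derivative
           - (c * exp (c * z)) / (1 + exp (c * z))^2) (at z)"
proof -
  have "1 + exp (c * z) \<noteq> 0"
    by (metis add_pos_pos exp_gt_zero less_irrefl zero_less_one)
  then show ?thesis
    by (auto intro!: derivative_eq_intros simp: field_simps power2_eq_square)
qed

lemma logistic_derivative_ge:
  fixes c e :: real
  assumes "c \<ge> 0" and "e > 0"
  shows "- (c * e) / (1 + e)^2 \<ge> - c / 4"
proof -
  have "4 * e \<le> (1 + e)^2"
    using zero_le_power2[of "e - 1"] by (simp add: power2_eq_square algebra_simps)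
  then have "c * (4 * e) \<le> c * (1 + e)^2"
    using assms(1) by (rule mult_left_mono)
  moreover have "(1 + e)^2 > 0"
    using assms(2) by simp
  ultimately show ?thesis
    by (simp add: divide_le_eq)
qed

lemma logistic_diff_ge:
  fixes c x y :: real
  assumes "c \<ge> 0" and "y \<le> x"
  shows "1 / (1 + exp (c * x)) - 1 / (1 + exp (c * y)) \<ge> - (c / 4) * (x - y)"
proof -
  let ?g = "\<lambda>z::real. 1 / (1 + exp (c * z)) + (c / 4) * z"
  have "?g y \<le> ?g x"
  proof (rule DERIV_nonneg_imp_nondecreasing[OF \<open>y \<le> x\<close>])
    fix z :: real
    have "(?g has_real_derivative - (c * exp (c * z)) / (1 + exp (c * z))^2 + c / 4) (at z)"
      by (rule DERIV_add[OF has_real_derivative_logistic])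
        (auto intro!: derivative_eq_intros)
    moreover have "- (c * exp (c * z)) / (1 + exp (c * z))^2 + c / 4 \<ge> 0"
      using logistic_derivative_ge[OF \<open>c \<ge> 0\<close> exp_gt_zero] by simp
    ultimately show "\<exists>D. (?g has_real_derivative D) (at z) \<and> 0 \<le> D"
      by blast
  qed
  then show ?thesis
    by (simp add: field_simps)
qed

lemma logistic_step_gap_ge:
  fixes a c x y :: real
  assumes "c \<ge> 0" and "a \<ge> 0" and "y \<le> x"
  shows "(x + a * (1 / (1 + exp (c * x)))) - (y + a * (1 / (1 + exp (c * y))))
           \<ge> (1 - c * a / 4) * (x - y)"
proof -
  have "a * (- (c / 4) * (x - y)) \<le> a * (1 / (1 + exp (c * x)) - 1 / (1 + exp (c * y)))"
    using logistic_diff_ge[OF assms(1,3)] assms(2) by (rule mult_left_mono)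
  then show ?thesis
    by (simp add: algebra_simps)
qed

lemma prod_lower_bound_of_step_ge:
  fixes d q :: "nat \<Rightarrow> real"
  assumes q_nonneg: "\<And>t. t \<ge> 1 \<Longrightarrow> q t \<ge> 0"
    and step: "\<And>t. t \<ge> 1 \<Longrightarrow> d t \<ge> 0 \<Longrightarrow> d (t + 1) \<ge> q t * d t"
    and init: "d 1 \<ge> 0"
    and "t \<ge> 1"
  shows "d t \<ge> d 1 * (\<Prod>i=1..t-1. q i)"
  using \<open>t \<ge> 1\<close>
proof (induction t rule: nat_induct_at_least)
  case base
  then show ?case by simp
next
  case (Suc n)
  have prod_nonneg: "(\<Prod>i=1..n-1. q i) \<ge> 0"
    using q_nonneg by (auto intro: prod_nonneg)
  have "d n \<ge> 0"
    using Suc.IH init prod_nonneg by (meson mult_nonneg_nonneg order_trans)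
  have "{1..Suc n - 1} = insert n {1..n-1}"
    using Suc.hyps by auto
  then have "d 1 * (\<Prod>i=1..Suc n - 1. q i) = q n * (d 1 * (\<Prod>i=1..n-1. q i))"
    using Suc.hyps by (simp add: mult_ac)
  also have "\<dots> \<le> q n * d n"
    using Suc.IH q_nonneg[OF Suc.hyps] by (rule mult_left_mono)
  also have "\<dots> \<le> d (Suc n)"
    using step[OF Suc.hyps \<open>d n \<ge> 0\<close>] by simp
  finally show ?case .
qed

theorem lemmaA3:
  fixes c :: real and \<alpha> \<theta> \<theta>' :: "nat \<Rightarrow> real"
  assumes c_pos: "c > 0"
    and \<alpha>_nonneg: "\<And>t. t \<ge> 1 \<Longrightarrow> \<alpha> t \<ge> 0"
    and \<alpha>_bound: "\<And>t. t \<ge> 1 \<Longrightarrow> c * \<alpha> t / 4 \<le> 1"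
    and \<theta>_rec: "\<And>t. t \<ge> 1 \<Longrightarrow> \<theta> (t + 1) = \<theta> t + \<alpha> t * (1 / (1 + exp (c * \<theta> t)))"
    and \<theta>'_rec: "\<And>t. t \<ge> 1 \<Longrightarrow> \<theta>' (t + 1) = \<theta>' t + \<alpha> t * (1 / (1 + exp (c * \<theta>' t)))"
    and init: "\<theta> 1 - \<theta>' 1 \<ge> 0"
  shows "\<forall>t\<ge>1. \<theta> t - \<theta>' t \<ge> (\<theta> 1 - \<theta>' 1) * (\<Prod>i=1..t-1. (1 - c * \<alpha> i / 4))"
proof (intro allI impI)
  fix t :: nat
  assume "t \<ge> 1"
  have step: "\<theta> (t + 1) - \<theta>' (t + 1) \<ge> (1 - c * \<alpha> t / 4) * (\<theta> t - \<theta>' t)"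
    if "t \<ge> 1" and "\<theta> t - \<theta>' t \<ge> 0" for t
    using logistic_step_gap_ge[of c "\<alpha> t" "\<theta>' t" "\<theta> t"] c_pos \<alpha>_nonneg[OF that(1)] that(2)
      \<theta>_rec[OF that(1)] \<theta>'_rec[OF that(1)]
    by simp
  show "\<theta> t - \<theta>' t \<ge> (\<theta> 1 - \<theta>' 1) * (\<Prod>i=1..t-1. (1 - c * \<alpha> i / 4))"
    using prod_lower_bound_of_step_ge[where d = "\<lambda>t. \<theta> t - \<theta>' t"] \<alpha>_bound step init \<open>t \<ge> 1\<close>
    by simp
qed

end
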